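(* Let $f,g:\{0,\dots,r-1\}^n\to\mathbb{R}$ be $r$-valued fitness functions such that the first position of $f$ weakly prefers the value $r-1$ and the first position of $g$ is neutral. Let $p$ and $q$ be the frequency matrices of the $r$-cGA optimizing $f$ and $g$, respectively. Then for all $t\in\mathbb{N}$, $p^{(t)}_{1,r-1}$ stochastically dominates $q^{(t)}_{1,r-1}$.
   Context: Let $n\geq 1$, $r\geq 2$ be integers and $K>0$. The $r$-cGA maximizing a function $h$ maintains frequencies $p^{(t)}_{i,j}$ ($i\in\{1,\dots,n\}$, $j\in\{0,\dots,r-1\}$), initialized to $1/r$. In iteration $t$ it samples $x,y\in\{0,\dots,r-1\}^n$ independently, each position $i$ independently with $\Pr[x_i=j]=p^{(t)}_{i,j}$; if $h(x)<h(y)$ it swaps $x$ and $y$; then it sets $p^{(t+1)}_{i,j}=p^{(t)}_{i,j}+\frac1K(\mathbf{1}[x_i=j]-\mathbf{1}[y_i=j])$ for all $i,j$, with no margins. It is assumed (well-behaved frequency assumption) that $1/r$ is an integer multiple of $1/K$, so frequencies lie in $\{0,1/K,\dots,1\}$. A position $i$ is neutral for $h$ if $h(x)=h(x')$ whenever $x,x'$ agree outside position $i$. The function $f$ weakly prefers value $j$ at position $i$ if for all $x\in\{0,\dots,r-1\}^n$, $f(x_1,\dots,x_{i-1},x_i,x_{i+1},\dots,x_n)\leq f(x_1,\dots,x_{i-1},j,x_{i+1},\dots,x_n)$. A random variable $Z$ stochastically dominates $Y$ if $\Pr[Z\leq\lambda]\leq\Pr[Y\leq\lambda]$ for all $\lambda\in\mathbb{R}$.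 *)

theory Defs
  imports "HOL-Probability.Probability"
begin

text \<open>Positions are indexed 0..n-1 (paper: 1..n), values 0..r-1.
  A search point is a function nat => nat that is 0 outside positions 0..n-1.\<close>

definition search_space :: "nat \<Rightarrow> nat \<Rightarrow> (nat \<Rightarrow> nat) set" where
  "search_space n r = {x. (\<forall>i<n. x i < r) \<and> (\<forall>i. n \<le> i \<longrightarrow> x i = 0)}"

text \<open>Frequency matrix: p i j = frequency of value j at position i.\<close>
type_synonym freq = "nat \<Rightarrow> nat \<Rightarrow> real"

text \<open>Categorical distribution on {0..<r} with weights w 0, ..., w (r-1)
  (fallback to point mass at 0 if weights are not a probability vector;
  never reached along the run of the algorithm).\<close>
definition categorical :: "(nat \<Rightarrow> real) \<Rightarrow> nat \<Rightarrow> nat pmf" where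
  "categorical w r =
     (let xs = map (\<lambda>j. (j, w j)) [0..<r] in
      if pmf_of_list_wf xs then pmf_of_list xs else return_pmf 0)"

definition sample :: "nat \<Rightarrow> nat \<Rightarrow> freq \<Rightarrow> (nat \<Rightarrow> nat) pmf" where
  "sample n r p = Pi_pmf {..<n} 0 (\<lambda>i. categorical (p i) r)"

definition ind :: "bool \<Rightarrow> real" where
  "ind b = (if b then 1 else 0)"

text \<open>One iteration of the r-cGA (no margins) maximizing h.\<close>
definition rcga_step :: "((nat \<Rightarrow> nat) \<Rightarrow> real) \<Rightarrow> nat \<Rightarrow> nat \<Rightarrow> real \<Rightarrow> freq \<Rightarrow> freq pmf" where
  "rcga_step h n r K p =
     do { x \<leftarrow> sample n r p;
          y \<leftarrow> sample n r p;
          let (x', y') = (if h x < h y then (y, x) else (x, y));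
          return_pmf (\<lambda>i j. p i j + (1 / K) * (ind (x' i = j) - ind (y' i = j))) }"

primrec rcga :: "((nat \<Rightarrow> nat) \<Rightarrow> real) \<Rightarrow> nat \<Rightarrow> nat \<Rightarrow> real \<Rightarrow> nat \<Rightarrow> freq pmf" where
  "rcga h n r K 0 = return_pmf (\<lambda>i j. 1 / real r)"
| "rcga h n r K (Suc t) = rcga h n r K t \<bind> rcga_step h n r K"

definition neutral :: "((nat \<Rightarrow> nat) \<Rightarrow> real) \<Rightarrow> nat \<Rightarrow> nat \<Rightarrow> nat \<Rightarrow> bool" where
  "neutral h n r i = (\<forall>x \<in> search_space n r. \<forall>x' \<in> search_space n r.
       (\<forall>k. k \<noteq> i \<longrightarrow> x k = x' k) \<longrightarrow> h x = h x')"

definition weakly_prefers :: "((nat \<Rightarrow> nat) \<Rightarrow> real) \<Rightarrow> nat \<Rightarrow> nat \<Rightarrow> nat \<Rightarrow> nat \<Rightarrow> bool" where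
  "weakly_prefers f n r i j = (\<forall>x \<in> search_space n r. f x \<le> f (x(i := j)))"

definition stoch_dom :: "real pmf \<Rightarrow> real pmf \<Rightarrow> bool" where
  "stoch_dom Z Y = (\<forall>c. measure_pmf.prob Z {..c} \<le> measure_pmf.prob Y {..c})"

end

theory Submission
  imports Defs
begin

text \<open>
  One iteration changes the frequency \<open>a\<close> of value \<open>k\<close> at position \<open>i\<close> by \<open>\<plusminus>1/K\<close>: up if
  the winner has \<open>k\<close> at position \<open>i\<close> and the loser does not, down in the opposite case.
  Together these two events have probability \<open>2 a (1 - a)\<close>, whatever the fitness function.
  Exchanging the \<open>i\<close>-th entries of the two samples preserves their joint law; if \<open>k\<close> is
  weakly preferred at \<open>i\<close> it maps the down event into the up event, and if \<open>i\<close> is neutral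
  it exchanges the two events. Hence, from any state, the probability that the next frequency
  is at most \<open>c\<close> is at most its value \<open>\<psi>\<^sub>c(a)\<close> in the neutral case, with equality under \<open>g\<close>.
  Frequencies stay on the grid \<open>(1/K)\<int> \<inter> [0,1]\<close>, where \<open>\<psi>\<^sub>c\<close> is a nonnegative combination of
  indicators of half-lines \<open>(-\<infinity>, c']\<close>; so its expectation is antitone under stochastic
  dominance, and induction on \<open>t\<close> concludes.
\<close>

type_synonym point_pair = "(nat \<Rightarrow> nat) \<times> (nat \<Rightarrow> nat)"

abbreviation sample_pair :: "nat \<Rightarrow> nat \<Rightarrow> freq \<Rightarrow> point_pair pmf" where
  "sample_pair n r p \<equiv> pair_pmf (sample n r p) (sample n r p)"

lemma measure_bind_pmf: "measure (bind_pmf M N) X = (\<integral>x. measure (N x) X \<partial>M)"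
proof -
  have "emeasure (bind_pmf M N) X = (\<integral>\<^sup>+x. ennreal (measure (N x) X) \<partial>M)"
    using emeasure_bind_pmf[of M N X] by (simp only: measure_pmf.emeasure_eq_measure)
  also have "\<dots> = ennreal (\<integral>x. measure (N x) X \<partial>M)"
    by (intro nn_integral_eq_integral measure_pmf.integrable_const_bound[where B=1]) auto
  finally show ?thesis
    by (simp add: measure_pmf.emeasure_eq_measure integral_nonneg_AE)
qed

lemma pmf_categorical:
  assumes "\<forall>j<r. 0 \<le> w j" and "(\<Sum>j<r. w j) = 1"
  shows "pmf (categorical w r) j = (if j < r then w j else 0)"
proof -
  let ?xs = "map (\<lambda>j. (j, w j)) [0..<r]"
  have "pmf_of_list_wf ?xs"
    using assms by (auto simp: pmf_of_list_wf_def o_def sum_list_sum_nth atLeast0LessThan)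
  moreover have "filter (\<lambda>z. fst z = j) ?xs = map (\<lambda>j. (j, w j)) (filter (\<lambda>l. l = j) [0..<r])"
    by (simp add: filter_map o_def)
  moreover have "filter (\<lambda>l. l = j) [0..<r] = (if j < r then [j] else [])"
    by (induction r) auto
  ultimately show ?thesis
    by (simp add: categorical_def pmf_pmf_of_list)
qed

lemma set_pmf_categorical_subset: "0 < r \<Longrightarrow> set_pmf (categorical w r) \<subseteq> {..<r}"
  using set_pmf_of_list[of "map (\<lambda>j. (j, w j)) [0..<r]"] by (auto simp: categorical_def Let_def atLeast0LessThan)

lemma map_pmf_sample_component: "i < n \<Longrightarrow> map_pmf (\<lambda>x. x i) (sample n r p) = categorical (p i) r"
  by (simp add: sample_def Pi_pmf_component)

lemma sample_component_in_set_pmf: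
  "x \<in> set_pmf (sample n r p) \<Longrightarrow> i < n \<Longrightarrow> x i \<in> set_pmf (categorical (p i) r)"
  by (metis map_pmf_sample_component pmf.set_map imageI)

lemma sample_in_search_space: "x \<in> set_pmf (sample n r p) \<Longrightarrow> 0 < r \<Longrightarrow> x \<in> search_space n r"
  using sample_component_in_set_pmf[of x n r p] set_pmf_categorical_subset[of r]
  by (fastforce simp: search_space_def sample_def set_Pi_pmf PiE_dflt_def)

lemma pmf_sample_fun_upd:
  assumes "i < n"
  obtains R where "\<And>v. pmf (sample n r p) (x(i := v)) = pmf (categorical (p i) r) v * R"
proof
  fix v
  have "i \<in> {..<n}" using assms by simp
  then show "pmf (sample n r p) (x(i := v)) = pmf (categorical (p i) r) v *
      (if \<forall>j. j \<notin> {..<n} \<longrightarrow> x j = 0 then \<Prod>j\<in>{..<n} - {i}. pmf (categorical (p j) r) (x j) else 0)"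
    unfolding sample_def pmf_Pi[OF finite_lessThan]
    by (auto simp: prod.remove intro!: prod.cong)
qed

definition swap_component :: "nat \<Rightarrow> point_pair \<Rightarrow> point_pair" where
  "swap_component i = (\<lambda>(x, y). (x(i := y i), y(i := x i)))"

lemma swap_component_swap_component [simp]: "swap_component i (swap_component i z) = z"
  by (auto simp: swap_component_def split: prod.splits)

lemma swap_component_in_search_space:
  "x \<in> search_space n r \<Longrightarrow> y \<in> search_space n r \<Longrightarrow>
    swap_component i (x, y) \<in> search_space n r \<times> search_space n r"
  by (auto simp: swap_component_def search_space_def)

lemma map_pmf_swap_component_sample_pair:
  assumes "i < n"
  shows "map_pmf (swap_component i) (sample_pair n r p) = sample_pair n r p"
    (is "map_pmf ?s ?M = ?M")
proof (rule pmf_eqI)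
  fix z :: point_pair
  obtain x y where z: "z = (x, y)" by fastforce
  obtain Rx where Rx: "\<And>v. pmf (sample n r p) (x(i := v)) = pmf (categorical (p i) r) v * Rx"
    using pmf_sample_fun_upd[OF assms] by blast
  obtain Ry where Ry: "\<And>v. pmf (sample n r p) (y(i := v)) = pmf (categorical (p i) r) v * Ry"
    using pmf_sample_fun_upd[OF assms] by blast
  have "pmf (map_pmf ?s ?M) z = pmf ?M (?s z)"
    by (metis pmf_map_inj' inj_on_inverseI swap_component_swap_component)
  also have "\<dots> = pmf (sample n r p) (x(i := y i)) * pmf (sample n r p) (y(i := x i))"
    by (simp add: z swap_component_def pmf_pair)
  also have "\<dots> = pmf (sample n r p) (x(i := x i)) * pmf (sample n r p) (y(i := y i))"
    by (simp only: Rx Ry ac_simps)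
  also have "\<dots> = pmf ?M z"
    by (simp add: z pmf_pair)
  finally show "pmf (map_pmf ?s ?M) z = pmf ?M z" .
qed

lemma measure_sample_pair_swap_component:
  assumes "i < n"
  shows "measure (sample_pair n r p) A =
    measure (sample_pair n r p) (swap_component i -` A \<inter> set_pmf (sample_pair n r p))"
  by (metis assms map_pmf_swap_component_sample_pair measure_Int_set_pmf measure_map_pmf)

definition winner_first :: "((nat \<Rightarrow> nat) \<Rightarrow> real) \<Rightarrow> point_pair \<Rightarrow> point_pair" where
  "winner_first h = (\<lambda>(x, y). if h x < h y then (y, x) else (x, y))"

definition freq_update :: "real \<Rightarrow> freq \<Rightarrow> point_pair \<Rightarrow> freq" where
  "freq_update K p = (\<lambda>(x, y) i j. p i j + 1 / K * (ind (x i = j) - ind (y i = j)))"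

lemma rcga_step_eq_map_pmf:
  "rcga_step h n r K p = map_pmf (freq_update K p \<circ> winner_first h) (sample_pair n r p)"
  unfolding rcga_step_def pair_pmf_def map_pmf_def winner_first_def freq_update_def
  by (auto simp: bind_assoc_pmf bind_return_pmf intro!: bind_pmf_cong)

definition grid_prob_vector :: "real \<Rightarrow> nat \<Rightarrow> (nat \<Rightarrow> real) \<Rightarrow> bool" where
  "grid_prob_vector K r w \<longleftrightarrow> (\<forall>j<r. 0 \<le> w j \<and> w j * K \<in> \<int>) \<and> (\<Sum>j<r. w j) = 1"

lemma grid_prob_vector_le_1:
  assumes "grid_prob_vector K r w" and "j < r"
  shows "w j \<le> 1"
proof -
  have "w j \<le> (\<Sum>l<r. w l)"
    using assms by (intro member_le_sum) (auto simp: grid_prob_vector_def)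
  then show ?thesis
    using assms by (simp add: grid_prob_vector_def)
qed

lemma set_pmf_categorical_grid:
  assumes "grid_prob_vector K r w"
  shows "set_pmf (categorical w r) = {j. j < r \<and> w j \<noteq> 0}"
  using assms by (auto simp: set_pmf_eq pmf_categorical grid_prob_vector_def)

lemma grid_prob_vector_nonzero_ge:
  assumes "grid_prob_vector K r w" and "K > 0" and "j < r" and "w j \<noteq> 0"
  shows "1 / K \<le> w j"
proof -
  have "w j * K \<in> \<int>" "0 \<le> w j * K" "w j * K \<noteq> 0"
    using assms by (auto simp: grid_prob_vector_def)
  then have "1 \<le> w j * K"
    using Ints_nonzero_abs_ge1 by fastforce
  then show ?thesis
    using \<open>K > 0\<close> by (simp add: field_simps)
qed

lemma grid_prob_vector_rcga_step:
  assumes valid: "grid_prob_vector K r (p i)" and "K > 0" and "i < n"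
    and "q \<in> set_pmf (rcga_step h n r K p)"
  shows "grid_prob_vector K r (q i)"
proof -
  obtain x y where "x \<in> set_pmf (sample n r p)" "y \<in> set_pmf (sample n r p)"
    and q: "q = freq_update K p (winner_first h (x, y))"
    using assms(4) by (auto simp: rcga_step_eq_map_pmf)
  moreover obtain u v where uv: "winner_first h (x, y) = (u, v)" "{u, v} = {x, y}"
    by (simp add: winner_first_def) (metis insert_commute)
  ultimately have "u i \<in> set_pmf (categorical (p i) r)" "v i \<in> set_pmf (categorical (p i) r)"
    using sample_component_in_set_pmf \<open>i < n\<close> by (metis doubleton_eq_iff)+
  then have u: "u i < r" and v: "v i < r" "p i (v i) \<noteq> 0"
    using valid by (auto simp: set_pmf_categorical_grid)
  have q_i: "q i j = p i j + (ind (u i = j) - ind (v i = j)) / K" for j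
    by (simp add: q uv freq_update_def)
  have "q i j * K \<in> \<int>" if "j < r" for j
  proof -
    have "q i j * K = p i j * K + ind (u i = j) - ind (v i = j)"
      using \<open>K > 0\<close> by (simp add: q_i field_simps)
    then show ?thesis
      using valid that by (simp add: grid_prob_vector_def ind_def)
  qed
  moreover have "0 \<le> q i j" if "j < r" for j
  proof (cases "v i = j \<and> u i \<noteq> j")
    case True
    then have "1 / K \<le> p i j"
      using grid_prob_vector_nonzero_ge[OF valid \<open>K > 0\<close> \<open>j < r\<close>] v by simp
    with True show ?thesis
      by (simp add: q_i ind_def)
  next
    case False
    then show ?thesis
      using valid that \<open>K > 0\<close> by (auto simp: q_i ind_def grid_prob_vector_def)
  qed
  moreover have "(\<Sum>j<r. q i j) = 1"
    using valid u v
    by (simp add: q_i sum.distrib diff_divide_distrib[symmetric] sum_divide_distrib[symmetric]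
        sum_subtractf ind_def grid_prob_vector_def)
  ultimately show ?thesis
    by (simp add: grid_prob_vector_def)
qed

lemma grid_prob_vector_rcga:
  assumes "K > 0" and "0 < r" and "i < n" and "1 / real r * K \<in> \<int>"
    and "p \<in> set_pmf (rcga h n r K t)"
  shows "grid_prob_vector K r (p i)"
  using assms(5)
proof (induction t arbitrary: p)
  case 0
  then show ?case
    using assms(2,4) by (simp add: grid_prob_vector_def)
next
  case (Suc t)
  then show ?case
    by (auto intro: grid_prob_vector_rcga_step[OF Suc.IH assms(1,3)])
qed

definition gain_event :: "((nat \<Rightarrow> nat) \<Rightarrow> real) \<Rightarrow> nat \<Rightarrow> nat \<Rightarrow> point_pair set" where
  "gain_event h i k = {z. fst (winner_first h z) i = k \<and> snd (winner_first h z) i \<noteq> k}"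

definition loss_event :: "((nat \<Rightarrow> nat) \<Rightarrow> real) \<Rightarrow> nat \<Rightarrow> nat \<Rightarrow> point_pair set" where
  "loss_event h i k = {z. snd (winner_first h z) i = k \<and> fst (winner_first h z) i \<noteq> k}"

text \<open>The distribution function at \<open>c\<close> of \<open>a + e D\<close>, where \<open>D\<close> takes the values
  \<open>1\<close>, \<open>-1\<close>, \<open>0\<close> with probabilities \<open>up\<close>, \<open>down\<close>, \<open>1 - up - down\<close>.\<close>

definition increment_cdf :: "real \<Rightarrow> real \<Rightarrow> real \<Rightarrow> real \<Rightarrow> real \<Rightarrow> real" where
  "increment_cdf e up down a c =
     (if a + e \<le> c then 1 else if a \<le> c then 1 - up else if a - e \<le> c then down else 0)"

lemma increment_cdf_mono:
  "up' \<le> up \<Longrightarrow> down \<le> down' \<Longrightarrow> increment_cdf e up down a c \<le> increment_cdf e up' down' a c"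
  by (simp add: increment_cdf_def)

lemma measure_increment_atMost:
  fixes M :: "'a pmf"
  assumes "e > 0" and "A \<inter> B = {}"
  shows "measure M {z. a + (if z \<in> A then e else if z \<in> B then - e else 0) \<le> c} =
    increment_cdf e (measure M A) (measure M B) a c"
proof -
  have "{z. a + (if z \<in> A then e else if z \<in> B then - e else 0) \<le> c} =
      (if a + e \<le> c then UNIV else if a \<le> c then - A else if a - e \<le> c then B else {})"
    using assms by auto
  then show ?thesis
    by (simp add: increment_cdf_def Compl_eq_Diff_UNIV
        measure_pmf.prob_compl[unfolded space_measure_pmf, symmetric])
qed

lemma prob_rcga_step_atMost:
  assumes "K > 0"
  shows "measure (rcga_step h n r K p) {q. q i k \<le> c} =
    increment_cdf (1 / K) (measure (sample_pair n r p) (gain_event h i k))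
      (measure (sample_pair n r p) (loss_event h i k)) (p i k) c"
proof -
  have "freq_update K p (winner_first h z) i k = p i k +
      (if z \<in> gain_event h i k then 1 / K else if z \<in> loss_event h i k then - (1 / K) else 0)" for z
    by (auto simp: freq_update_def gain_event_def loss_event_def ind_def split: prod.split)
  moreover have "gain_event h i k \<inter> loss_event h i k = {}"
    by (auto simp: gain_event_def loss_event_def)
  ultimately show ?thesis
    using assms by (simp add: rcga_step_eq_map_pmf vimage_def measure_increment_atMost)
qed

lemma prob_gain_add_loss:
  assumes "grid_prob_vector K r (p i)" and "i < n" and "k < r"
  shows "measure (sample_pair n r p) (gain_event h i k)
       + measure (sample_pair n r p) (loss_event h i k) = 2 * p i k * (1 - p i k)"
proof -
  let ?M = "sample_pair n r p"
  let ?C = "categorical (p i) r"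
  have prob_k: "measure ?C {k} = p i k"
    using assms by (simp add: measure_pmf_single pmf_categorical grid_prob_vector_def)
  let ?S = "{k} \<times> (- {k}) \<union> (- {k}) \<times> {k}"
  have "measure ?M (gain_event h i k) + measure ?M (loss_event h i k)
      = measure ?M (gain_event h i k \<union> loss_event h i k)"
    by (intro measure_pmf.finite_measure_Union[symmetric]) (auto simp: gain_event_def loss_event_def)
  also have "gain_event h i k \<union> loss_event h i k = (\<lambda>(x, y). (x i, y i)) -` ?S"
    by (auto simp: gain_event_def loss_event_def winner_first_def split: if_splits)
  also have "measure ?M ((\<lambda>(x, y). (x i, y i)) -` ?S) = measure (map_pmf (\<lambda>(x, y). (x i, y i)) ?M) ?S"
    by simp
  also have "map_pmf (\<lambda>(x, y). (x i, y i)) ?M = pair_pmf ?C ?C"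
    using assms(2) by (simp add: map_pair map_pmf_sample_component)
  also have "measure (pair_pmf ?C ?C) ?S
      = measure (pair_pmf ?C ?C) ({k} \<times> (- {k})) + measure (pair_pmf ?C ?C) ((- {k}) \<times> {k})"
    by (intro measure_pmf.finite_measure_Union) auto
  also have "\<dots> = 2 * measure ?C {k} * (1 - measure ?C {k})"
    by (simp add: measure_pmf_prob_product measure_pmf.prob_compl[unfolded space_measure_pmf, symmetric]
        Compl_eq_Diff_UNIV)
  finally show ?thesis
    by (simp only: prob_k)
qed

lemma swap_component_loss_imp_gain:
  assumes pref: "weakly_prefers h n r i k"
    and "x \<in> search_space n r" and "y \<in> search_space n r"
    and loss: "swap_component i (x, y) \<in> loss_event h i k"
  shows "(x, y) \<in> gain_event h i k"
proof -
  define x' y' where "x' = x(i := y i)" and "y' = y(i := x i)"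
  have "x' \<in> search_space n r" "y' \<in> search_space n r"
    using swap_component_in_search_space[OF assms(2,3)] by (auto simp: x'_def y'_def swap_component_def)
  then have prefers: "h w \<le> h (w(i := k))" if "w \<in> {x, y, x', y'}" for w
    using pref assms(2,3) that unfolding weakly_prefers_def by blast
  \<comment> \<open>Gaining \<open>k\<close> can only raise fitness and losing it only lower it, so the holder of \<open>k\<close> still wins.\<close>
  show ?thesis
  proof (cases "h x' < h y'")
    case True
    with loss have "y i = k" "x i \<noteq> k"
      by (auto simp: loss_event_def winner_first_def swap_component_def x'_def y'_def)
    then have "h x \<le> h x'" "h y' \<le> h y"
      using prefers[of x] prefers[of y'] by (auto simp: x'_def y'_def)
    with True \<open>y i = k\<close> \<open>x i \<noteq> k\<close> show ?thesis
      by (simp add: gain_event_def winner_first_def)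
  next
    case False
    with loss have "x i = k" "y i \<noteq> k"
      by (auto simp: loss_event_def winner_first_def swap_component_def x'_def y'_def)
    then have "h x' \<le> h x" "h y \<le> h y'"
      using prefers[of x'] prefers[of y] by (auto simp: x'_def y'_def)
    with False \<open>x i = k\<close> \<open>y i \<noteq> k\<close> show ?thesis
      by (simp add: gain_event_def winner_first_def)
  qed
qed

lemma swap_component_gain_iff_loss:
  assumes "neutral h n r i" and "x \<in> search_space n r" and "y \<in> search_space n r"
  shows "swap_component i (x, y) \<in> gain_event h i k \<longleftrightarrow> (x, y) \<in> loss_event h i k"
proof -
  have "x(i := y i) \<in> search_space n r" "y(i := x i) \<in> search_space n r"
    using swap_component_in_search_space[OF assms(2,3)] by (simp_all add: swap_component_def)
  then have "h (x(i := y i)) = h x" "h (y(i := x i)) = h y"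
    using assms unfolding neutral_def by (metis fun_upd_other)+
  then show ?thesis
    by (auto simp: gain_event_def loss_event_def winner_first_def swap_component_def)
qed

lemma prob_loss_le_gain:
  assumes "weakly_prefers h n r i k" and "i < n" and "0 < r"
  shows "measure (sample_pair n r p) (loss_event h i k)
       \<le> measure (sample_pair n r p) (gain_event h i k)"
proof -
  let ?M = "sample_pair n r p"
  have "z \<in> gain_event h i k" if "z \<in> set_pmf ?M" "swap_component i z \<in> loss_event h i k" for z
    using that swap_component_loss_imp_gain[OF assms(1)] sample_in_search_space[OF _ assms(3)]
    by (cases z) auto
  then have "swap_component i -` loss_event h i k \<inter> set_pmf ?M \<subseteq> gain_event h i k"
    by blast
  then show ?thesis
    by (subst measure_sample_pair_swap_component[OF assms(2)])
      (rule measure_pmf.finite_measure_mono, simp_all)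
qed

lemma prob_gain_eq_loss:
  assumes "neutral h n r i" and "i < n" and "0 < r"
  shows "measure (sample_pair n r p) (gain_event h i k)
       = measure (sample_pair n r p) (loss_event h i k)"
proof -
  let ?M = "sample_pair n r p"
  have "swap_component i z \<in> gain_event h i k \<longleftrightarrow> z \<in> loss_event h i k" if "z \<in> set_pmf ?M" for z
    using that swap_component_gain_iff_loss[OF assms(1)] sample_in_search_space[OF _ assms(3)]
    by (cases z) auto
  then have "swap_component i -` gain_event h i k \<inter> set_pmf ?M = loss_event h i k \<inter> set_pmf ?M"
    by blast
  then have "measure ?M (swap_component i -` gain_event h i k \<inter> set_pmf ?M) = measure ?M (loss_event h i k)"
    by (simp only: measure_Int_set_pmf)
  then show ?thesis
    using measure_sample_pair_swap_component[OF assms(2), of r p "gain_event h i k"] by simp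
qed

definition neutral_cdf :: "real \<Rightarrow> real \<Rightarrow> real \<Rightarrow> real" where
  "neutral_cdf K a c = increment_cdf (1 / K) (a * (1 - a)) (a * (1 - a)) a c"

lemma prob_rcga_step_le_neutral_cdf:
  assumes "weakly_prefers h n r i k" and "grid_prob_vector K r (p i)"
    and "K > 0" and "i < n" and "k < r"
  shows "measure (rcga_step h n r K p) {q. q i k \<le> c} \<le> neutral_cdf K (p i k) c"
proof -
  let ?M = "sample_pair n r p"
  have "measure ?M (gain_event h i k) + measure ?M (loss_event h i k) = 2 * p i k * (1 - p i k)"
    using assms(2,4,5) by (rule prob_gain_add_loss)
  moreover have "measure ?M (loss_event h i k) \<le> measure ?M (gain_event h i k)"
    using assms(1,4,5) by (intro prob_loss_le_gain) simp_all
  ultimately show ?thesis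
    by (simp add: prob_rcga_step_atMost[OF assms(3)] neutral_cdf_def increment_cdf_mono)
qed

lemma prob_rcga_step_eq_neutral_cdf:
  assumes "neutral h n r i" and "grid_prob_vector K r (p i)"
    and "K > 0" and "i < n" and "k < r"
  shows "measure (rcga_step h n r K p) {q. q i k \<le> c} = neutral_cdf K (p i k) c"
proof -
  let ?M = "sample_pair n r p"
  have "measure ?M (gain_event h i k) + measure ?M (loss_event h i k) = 2 * p i k * (1 - p i k)"
    using assms(2,4,5) by (rule prob_gain_add_loss)
  moreover have "measure ?M (gain_event h i k) = measure ?M (loss_event h i k)"
    using assms(1,4,5) by (intro prob_gain_eq_loss) simp_all
  ultimately show ?thesis
    by (simp add: prob_rcga_step_atMost[OF assms(3)] neutral_cdf_def)
qed

lemma freq_rcga_on_grid: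
  assumes "K > 0" and "i < n" and "k < r" and "1 / real r * K \<in> \<int>"
    and "v \<in> set_pmf (map_pmf (\<lambda>p. p i k) (rcga h n r K t))"
  shows "0 \<le> v \<and> v \<le> 1 \<and> v * K \<in> \<int>"
proof -
  obtain p where p: "p \<in> set_pmf (rcga h n r K t)" and v: "v = p i k"
    using assms(5) by auto
  have "grid_prob_vector K r (p i)"
    using assms(1) _ assms(2,4) p by (rule grid_prob_vector_rcga) (use assms(3) in simp)
  then show ?thesis
    unfolding v using assms(3) grid_prob_vector_le_1 by (simp add: grid_prob_vector_def)
qed

lemma integrable_neutral_cdf:
  assumes "\<And>v. v \<in> set_pmf M \<Longrightarrow> 0 \<le> v \<and> v \<le> 1"
  shows "integrable M (\<lambda>v. neutral_cdf K v c)"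
proof (rule measure_pmf.integrable_const_bound[where B = 1], rule AE_pmfI)
  fix v
  assume "v \<in> set_pmf M"
  then show "norm (neutral_cdf K v c) \<le> 1"
    using assms by (auto simp: neutral_cdf_def increment_cdf_def mult_le_one)
qed simp

lemma neutral_cdf_grid_decomposition:
  assumes "K > 0"
  obtains \<alpha> \<beta> \<gamma> where "0 \<le> \<alpha>" "0 \<le> \<beta>" "0 \<le> \<gamma>"
    and "\<And>a. 0 \<le> a \<Longrightarrow> a \<le> 1 \<Longrightarrow> a * K \<in> \<int> \<Longrightarrow> neutral_cdf K a c =
       \<alpha> * indicator {..c - 1 / K} a + \<beta> * indicator {..c} a + \<gamma> * indicator {..c + 1 / K} a"
proof
  \<comment> \<open>The only grid points in \<open>(c - 1/K, c]\<close> and \<open>(c, c + 1/K]\<close> are \<open>a0\<close> and \<open>a1\<close>;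
    they may lie outside \<open>[0, 1]\<close>, hence the \<open>max 0\<close>.\<close>
  define J where "J = \<lfloor>c * K\<rfloor>"
  define a0 a1 where "a0 = J / K" and "a1 = (J + 1) / K"
  define v0 v1 where "v0 = max 0 (a0 * (1 - a0))" and "v1 = max 0 (a1 * (1 - a1))"
  have quarter: "t * (1 - t) \<le> 1 / 4" for t :: real
    using zero_le_power2[of "t - 1 / 2"] by (simp add: power2_eq_square algebra_simps)
  show "0 \<le> v0" "0 \<le> 1 - v0 - v1" "0 \<le> v1"
    using quarter[of a0] quarter[of a1] by (auto simp: v0_def v1_def)
  fix a
  assume a: "0 \<le> a" "a \<le> 1" "a * K \<in> \<int>"
  then obtain j :: int where j: "a = j / K"
    using \<open>K > 0\<close> by (metis Ints_cases nonzero_mult_div_cancel_right less_irrefl)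
  have nonneg: "0 \<le> a * (1 - a)"
    using a by simp
  have thresholds:
    "a + 1 / K \<le> c \<longleftrightarrow> j + 1 \<le> J" "a \<le> c - 1 / K \<longleftrightarrow> j + 1 \<le> J" "a \<le> c \<longleftrightarrow> j \<le> J"
    "a - 1 / K \<le> c \<longleftrightarrow> j - 1 \<le> J" "a \<le> c + 1 / K \<longleftrightarrow> j - 1 \<le> J"
    using \<open>K > 0\<close> by (simp_all add: j J_def le_floor_iff field_simps)
  consider "j + 1 \<le> J" | "j = J" | "j = J + 1" | "J + 1 < j"
    by linarith
  then show "neutral_cdf K a c =
      v0 * indicator {..c - 1 / K} a + (1 - v0 - v1) * indicator {..c} a + v1 * indicator {..c + 1 / K} a"
  proof cases
    case 2
    then have "v0 = a * (1 - a)"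
      using nonneg by (simp add: v0_def a0_def j)
    with 2 show ?thesis
      by (simp add: thresholds neutral_cdf_def increment_cdf_def)
  next
    case 3
    then have "v1 = a * (1 - a)"
      using nonneg by (simp add: v1_def a1_def j)
    with 3 show ?thesis
      by (simp add: thresholds neutral_cdf_def increment_cdf_def)
  qed (simp_all add: thresholds neutral_cdf_def increment_cdf_def)
qed

lemma integral_atMost_combination_mono:
  fixes Z Y :: "real pmf" and \<alpha> \<beta> \<gamma> :: real
  assumes "stoch_dom Z Y" and "0 \<le> \<alpha>" and "0 \<le> \<beta>" and "0 \<le> \<gamma>"
  shows "(\<integral>v. \<alpha> * indicator {..c1} v + \<beta> * indicator {..c2} v + \<gamma> * indicator {..c3} v \<partial>Z)
       \<le> (\<integral>v. \<alpha> * indicator {..c1} v + \<beta> * indicator {..c2} v + \<gamma> * indicator {..c3} v \<partial>Y)"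
proof -
  have integral_eq: "(\<integral>v. \<alpha> * indicator {..c1} v + \<beta> * indicator {..c2} v + \<gamma> * indicator {..c3} v \<partial>M)
      = \<alpha> * measure M {..c1} + \<beta> * measure M {..c2} + \<gamma> * measure M {..c3}" for M :: "real pmf"
  proof -
    have integrable: "integrable M (\<lambda>v. a * indicator A v :: real)" for a A
      by (rule measure_pmf.integrable_const_bound[where B = "\<bar>a\<bar>"]) (auto simp: indicator_def)
    show ?thesis
      using Bochner_Integration.integral_add[OF Bochner_Integration.integrable_add[OF integrable integrable] integrable]
        Bochner_Integration.integral_add[OF integrable integrable]
      by simp
  qed
  show ?thesis
    unfolding integral_eq using assms
    by (intro add_mono mult_left_mono) (simp_all add: stoch_dom_def)
qed

lemma integral_neutral_cdf_mono:
  assumes "K > 0" and "stoch_dom Z Y"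
    and grid: "\<And>v. v \<in> set_pmf Z \<union> set_pmf Y \<Longrightarrow> 0 \<le> v \<and> v \<le> 1 \<and> v * K \<in> \<int>"
  shows "(\<integral>v. neutral_cdf K v c \<partial>Z) \<le> (\<integral>v. neutral_cdf K v c \<partial>Y)"
proof -
  obtain \<alpha> \<beta> \<gamma> where coeffs: "0 \<le> \<alpha>" "0 \<le> \<beta>" "0 \<le> \<gamma>"
    and decomp: "\<And>a. 0 \<le> a \<Longrightarrow> a \<le> 1 \<Longrightarrow> a * K \<in> \<int> \<Longrightarrow> neutral_cdf K a c =
       \<alpha> * indicator {..c - 1 / K} a + \<beta> * indicator {..c} a + \<gamma> * indicator {..c + 1 / K} a"
    using neutral_cdf_grid_decomposition[OF \<open>K > 0\<close>] by blast
  have "(\<integral>v. neutral_cdf K v c \<partial>M) =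
      (\<integral>v. \<alpha> * indicator {..c - 1 / K} v + \<beta> * indicator {..c} v + \<gamma> * indicator {..c + 1 / K} v \<partial>M)"
    if "M \<in> {Z, Y}" for M
    using that grid by (intro integral_cong_AE AE_pmfI) (auto intro: decomp)
  then show ?thesis
    using integral_atMost_combination_mono[OF \<open>stoch_dom Z Y\<close> coeffs] by simp
qed

lemma prob_rcga_Suc_atMost:
  "measure (map_pmf (\<lambda>p. p i k) (rcga h n r K (Suc t))) {..c} =
     (\<integral>p. measure (rcga_step h n r K p) {q. q i k \<le> c} \<partial>rcga h n r K t)"
  by (simp add: measure_bind_pmf vimage_def)

lemma prob_rcga_Suc_le_neutral_cdf:
  assumes "weakly_prefers h n r i k" and "K > 0" and "i < n" and "k < r" and "1 / real r * K \<in> \<int>"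
  shows "measure (map_pmf (\<lambda>p. p i k) (rcga h n r K (Suc t))) {..c}
       \<le> (\<integral>v. neutral_cdf K v c \<partial>map_pmf (\<lambda>p. p i k) (rcga h n r K t))"
proof -
  have "integrable (map_pmf (\<lambda>p. p i k) (rcga h n r K t)) (\<lambda>v. neutral_cdf K v c)"
    by (rule integrable_neutral_cdf) (use freq_rcga_on_grid[OF assms(2-5)] in blast)
  then have integrable: "integrable (rcga h n r K t) (\<lambda>p. neutral_cdf K (p i k) c)"
    by simp
  have "measure (map_pmf (\<lambda>p. p i k) (rcga h n r K (Suc t))) {..c}
      = (\<integral>p. measure (rcga_step h n r K p) {q. q i k \<le> c} \<partial>rcga h n r K t)"
    by (rule prob_rcga_Suc_atMost)
  also have "\<dots> \<le> (\<integral>p. neutral_cdf K (p i k) c \<partial>rcga h n r K t)"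
  proof (rule integral_mono_AE[OF _ integrable AE_pmfI])
    show "integrable (rcga h n r K t) (\<lambda>p. measure (rcga_step h n r K p) {q. q i k \<le> c})"
      by (rule measure_pmf.integrable_const_bound[where B = 1]) auto
    fix p
    assume p: "p \<in> set_pmf (rcga h n r K t)"
    have "grid_prob_vector K r (p i)"
      using assms(2) _ assms(3,5) p by (rule grid_prob_vector_rcga) (use assms(4) in simp)
    with assms(1) show "measure (rcga_step h n r K p) {q. q i k \<le> c} \<le> neutral_cdf K (p i k) c"
      using assms(2-4) by (rule prob_rcga_step_le_neutral_cdf)
  qed
  finally show ?thesis
    by simp
qed

lemma prob_rcga_Suc_eq_neutral_cdf:
  assumes "neutral h n r i" and "K > 0" and "i < n" and "k < r" and "1 / real r * K \<in> \<int>"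
  shows "measure (map_pmf (\<lambda>p. p i k) (rcga h n r K (Suc t))) {..c}
       = (\<integral>v. neutral_cdf K v c \<partial>map_pmf (\<lambda>p. p i k) (rcga h n r K t))"
proof -
  have "measure (map_pmf (\<lambda>p. p i k) (rcga h n r K (Suc t))) {..c}
      = (\<integral>p. measure (rcga_step h n r K p) {q. q i k \<le> c} \<partial>rcga h n r K t)"
    by (rule prob_rcga_Suc_atMost)
  also have "\<dots> = (\<integral>p. neutral_cdf K (p i k) c \<partial>rcga h n r K t)"
  proof (rule integral_cong_AE[OF _ _ AE_pmfI])
    fix p
    assume p: "p \<in> set_pmf (rcga h n r K t)"
    have "grid_prob_vector K r (p i)"
      using assms(2) _ assms(3,5) p by (rule grid_prob_vector_rcga) (use assms(4) in simp)
    with assms(1) show "measure (rcga_step h n r K p) {q. q i k \<le> c} = neutral_cdf K (p i k) c"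
      using assms(2-4) by (rule prob_rcga_step_eq_neutral_cdf)
  qed simp_all
  finally show ?thesis
    by simp
qed

lemma rcga_stoch_dom:
  assumes "i < n" and "k < r" and "K > 0" and "1 / real r * K \<in> \<int>"
    and "weakly_prefers f n r i k" and "neutral g n r i"
  shows "stoch_dom (map_pmf (\<lambda>p. p i k) (rcga f n r K t)) (map_pmf (\<lambda>q. q i k) (rcga g n r K t))"
proof (induction t)
  case 0
  show ?case
    by (simp add: stoch_dom_def)
next
  case (Suc t)
  show ?case
    unfolding stoch_dom_def
  proof
    fix c
    have "measure (map_pmf (\<lambda>p. p i k) (rcga f n r K (Suc t))) {..c}
        \<le> (\<integral>v. neutral_cdf K v c \<partial>map_pmf (\<lambda>p. p i k) (rcga f n r K t))"
      using assms(5,3,1,2,4) by (rule prob_rcga_Suc_le_neutral_cdf)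
    also have "\<dots> \<le> (\<integral>v. neutral_cdf K v c \<partial>map_pmf (\<lambda>q. q i k) (rcga g n r K t))"
      using assms(3) Suc.IH
      by (rule integral_neutral_cdf_mono) (use freq_rcga_on_grid[OF assms(3,1,2,4)] in blast)
    also have "\<dots> = measure (map_pmf (\<lambda>q. q i k) (rcga g n r K (Suc t))) {..c}"
      using assms(6,3,1,2,4) by (rule prob_rcga_Suc_eq_neutral_cdf[symmetric])
    finally show "measure (map_pmf (\<lambda>p. p i k) (rcga f n r K (Suc t))) {..c}
        \<le> measure (map_pmf (\<lambda>q. q i k) (rcga g n r K (Suc t))) {..c}" .
  qed
qed

theorem theorem3:
  fixes f g :: "(nat \<Rightarrow> nat) \<Rightarrow> real" and n r :: nat and K :: real
  assumes "n \<ge> 1" and "r \<ge> 2" and "K > 0"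
    and "\<exists>m::nat. 1 / real r = real m * (1 / K)"
    and "weakly_prefers f n r 0 (r - 1)"
    and "neutral g n r 0"
  shows "\<forall>t::nat. stoch_dom (map_pmf (\<lambda>p. p 0 (r - 1)) (rcga f n r K t))
                             (map_pmf (\<lambda>q. q 0 (r - 1)) (rcga g n r K t))"
proof
  fix t
  obtain m :: nat where "1 / real r = real m * (1 / K)"
    using assms(4) by blast
  then have "1 / real r * K \<in> \<int>"
    using \<open>K > 0\<close> by simp
  then show "stoch_dom (map_pmf (\<lambda>p. p 0 (r - 1)) (rcga f n r K t))
                      (map_pmf (\<lambda>q. q 0 (r - 1)) (rcga g n r K t))"
    using assms by (intro rcga_stoch_dom) simp_all
qed

end
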